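(* Let $L=\{<,\ldots\}$ be a countable first order language containing a binary relation symbol $<$, and let $T$ be a complete $L$-theory with Skolem functions in which $<$ is interpreted as a linear order. Suppose $T$ satisfies the regularity scheme. Let $M\models T$, let $\varphi(\bar{x},\bar{t})$ be an $L$-formula with $\bar{x}=(x_1,\ldots,x_n)$, and let $\bar{b}\in M$ with $|\bar{b}|=|\bar{t}|$ be such that $\varphi(\bar{x},\bar{b})$ is $\bar{x}$-unbounded in $M$. Let $\tau(\bar{u},\bar{s})$ be an $L$-term with $|\bar{u}|<n$, and let $a\in M$. Then $\varphi(\bar{x},\bar{b})\wedge B_{\tau}(\bar{x};a)$ is $\bar{x}$-unbounded in $M$.
   Context: "$T$ has Skolem functions" means that for every formula $\theta(y,\bar{x})$ there is a term $\tau(\bar{x})$ of $L$ with $T\models \forall\bar{x}(\exists y\,\theta(y,\bar{x})\to\theta(\tau(\bar{x}),\bar{x}))$. Tuple inequalities such as $\bar{s}<a$ mean every coordinate is $<a$. For $\bar{x}=(x_1,\ldots,x_n)$ and a formula $\chi(\bar{x})$ with parameters from a model $M$, $\chi(\bar{x})$ is $\bar{x}$-unbounded in $M$ if $M\models(\forall\alpha_1)(\exists x_1>\alpha_1)\cdots(\forall\alpha_n)(\exists x_n>\alpha_n)\chi(\bar{x})$; otherwise it is $\bar{x}$-bounded. $T$ satisfies the regularity scheme if for every $L$-formula $\varphi(\bar{x},\bar{y},\bar{t})$ (with $\bar{x}$ of any finite length), every model $M\models T$, every $y_0\in M$ and every $\bar{b}\in M$: if $(\exists\bar{y}<y_0)\varphi(\bar{x},\bar{y},\bar{b})$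 is $\bar{x}$-unbounded in $M$, then for some $\bar{y}_1<y_0$ in $M$, $\varphi(\bar{x},\bar{y}_1,\bar{b})$ is $\bar{x}$-unbounded in $M$. For a term $\tau(\bar{u},\bar{s})$ with $k=|\bar{u}|<n$, for integers $0<i_1<\cdots<i_{k+1}\leq n$ and an element $a$, let $A_{\tau}(x_{i_1},\ldots,x_{i_{k+1}};a)$ be the formula $(\forall\bar{s}<a)[\tau(x_{i_1},\ldots,x_{i_k},\bar{s})<x_{i_{k+1}}]$, and let $B_{\tau}(x_1,\ldots,x_n;a)$ be the conjunction of $A_{\tau}(x_{i_1},\ldots,x_{i_{k+1}};a)$ over all $0<i_1<\cdots<i_{k+1}\leq n$. *)

theory Defs
  imports Main "HOL-Library.Countable"
begin

datatype 'f trm = Var nat | Fn 'f "'f trm list"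

datatype ('f, 'r) fm =
    FF
  | Eq "'f trm" "'f trm"
  | Rel 'r "'f trm list"
  | Imp "('f, 'r) fm" "('f, 'r) fm"
  | All nat "('f, 'r) fm"

definition Neg :: "('f, 'r) fm \<Rightarrow> ('f, 'r) fm" where
  "Neg p = Imp p FF"

fun vars_trm :: "'f trm \<Rightarrow> nat set" where
  "vars_trm (Var n) = {n}"
| "vars_trm (Fn f ts) = (\<Union>t\<in>set ts. vars_trm t)"

fun fv :: "('f, 'r) fm \<Rightarrow> nat set" where
  "fv FF = {}"
| "fv (Eq s t) = vars_trm s \<union> vars_trm t"
| "fv (Rel r ts) = (\<Union>t\<in>set ts. vars_trm t)"
| "fv (Imp p q) = fv p \<union> fv q"
| "fv (All n p) = fv p - {n}"

fun wf_trm :: "('f \<Rightarrow> nat) \<Rightarrow> 'f trm \<Rightarrow> bool" where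
  "wf_trm arF (Var n) = True"
| "wf_trm arF (Fn f ts) = (length ts = arF f \<and> (\<forall>t\<in>set ts. wf_trm arF t))"

fun wf_fm :: "('f \<Rightarrow> nat) \<Rightarrow> ('r \<Rightarrow> nat) \<Rightarrow> ('f, 'r) fm \<Rightarrow> bool" where
  "wf_fm arF arR FF = True"
| "wf_fm arF arR (Eq s t) = (wf_trm arF s \<and> wf_trm arF t)"
| "wf_fm arF arR (Rel r ts) = (length ts = arR r \<and> (\<forall>t\<in>set ts. wf_trm arF t))"
| "wf_fm arF arR (Imp p q) = (wf_fm arF arR p \<and> wf_fm arF arR q)"
| "wf_fm arF arR (All n p) = wf_fm arF arR p"

definition sentence :: "('f \<Rightarrow> nat) \<Rightarrow> ('r \<Rightarrow> nat) \<Rightarrow> ('f, 'r) fm \<Rightarrow> bool" where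
  "sentence arF arR p \<longleftrightarrow> wf_fm arF arR p \<and> fv p = {}"

record ('a, 'f, 'r) struc =
  carr :: "'a set"
  fns :: "'f \<Rightarrow> 'a list \<Rightarrow> 'a"
  rls :: "'r \<Rightarrow> 'a list \<Rightarrow> bool"

definition is_struc :: "('f \<Rightarrow> nat) \<Rightarrow> ('a, 'f, 'r, 'z) struc_scheme \<Rightarrow> bool" where
  "is_struc arF M \<longleftrightarrow> carr M \<noteq> {} \<and>
     (\<forall>f xs. length xs = arF f \<and> set xs \<subseteq> carr M \<longrightarrow> fns M f xs \<in> carr M)"

fun eval :: "('a, 'f, 'r, 'z) struc_scheme \<Rightarrow> (nat \<Rightarrow> 'a) \<Rightarrow> 'f trm \<Rightarrow> 'a" where
  "eval M e (Var n) = e n"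
| "eval M e (Fn f ts) = fns M f (map (eval M e) ts)"

fun sat :: "('a, 'f, 'r, 'z) struc_scheme \<Rightarrow> (nat \<Rightarrow> 'a) \<Rightarrow> ('f, 'r) fm \<Rightarrow> bool" where
  "sat M e FF = False"
| "sat M e (Eq s t) = (eval M e s = eval M e t)"
| "sat M e (Rel r ts) = rls M r (map (eval M e) ts)"
| "sat M e (Imp p q) = (sat M e p \<longrightarrow> sat M e q)"
| "sat M e (All n p) = (\<forall>a\<in>carr M. sat M (e(n := a)) p)"

definition asg_in :: "('a, 'f, 'r, 'z) struc_scheme \<Rightarrow> (nat \<Rightarrow> 'a) \<Rightarrow> bool" where
  "asg_in M e \<longleftrightarrow> (\<forall>v. e v \<in> carr M)"

definition asg :: "('a, 'f, 'r, 'z) struc_scheme \<Rightarrow> nat list \<Rightarrow> 'a list \<Rightarrow> nat \<Rightarrow> 'a" where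
  "asg M vs as v = (case map_of (zip vs as) v of Some a \<Rightarrow> a | None \<Rightarrow> (SOME d. d \<in> carr M))"

definition holds :: "('a, 'f, 'r, 'z) struc_scheme \<Rightarrow> ('f, 'r) fm \<Rightarrow> nat list \<Rightarrow> 'a list \<Rightarrow> bool" where
  "holds M p vs as \<longleftrightarrow> sat M (asg M vs as) p"

definition evalv :: "('a, 'f, 'r, 'z) struc_scheme \<Rightarrow> 'f trm \<Rightarrow> nat list \<Rightarrow> 'a list \<Rightarrow> 'a" where
  "evalv M t vs as = eval M (asg M vs as) t"

definition is_model :: "('f \<Rightarrow> nat) \<Rightarrow> ('r \<Rightarrow> nat) \<Rightarrow> ('f, 'r) fm set
    \<Rightarrow> ('a, 'f, 'r) struc \<Rightarrow> bool" where
  "is_model arF arR T M \<longleftrightarrow> is_struc arF M \<and>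
     (\<forall>p\<in>T. \<forall>e. asg_in M e \<longrightarrow> sat M e p)"

definition lessM :: "('a, 'f, 'r, 'z) struc_scheme \<Rightarrow> 'r \<Rightarrow> 'a \<Rightarrow> 'a \<Rightarrow> bool" where
  "lessM M lt x y \<longleftrightarrow> rls M lt [x, y]"

section \<open>Properties of theories (models range over structures on the type 'a)\<close>

definition complete_theory :: "'a itself \<Rightarrow> ('f \<Rightarrow> nat) \<Rightarrow> ('r \<Rightarrow> nat) \<Rightarrow> ('f, 'r) fm set \<Rightarrow> bool" where
  "complete_theory _ arF arR T \<longleftrightarrow>
     (\<forall>p\<in>T. sentence arF arR p) \<and>
     (\<exists>M :: ('a, 'f, 'r) struc. is_model arF arR T M) \<and>
     (\<forall>p. sentence arF arR p \<longrightarrow>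
        (\<forall>M :: ('a, 'f, 'r) struc. is_model arF arR T M \<longrightarrow> (\<forall>e. asg_in M e \<longrightarrow> sat M e p)) \<or>
        (\<forall>M :: ('a, 'f, 'r) struc. is_model arF arR T M \<longrightarrow> (\<forall>e. asg_in M e \<longrightarrow> sat M e (Neg p))))"

definition lt_linear :: "'a itself \<Rightarrow> ('f \<Rightarrow> nat) \<Rightarrow> ('r \<Rightarrow> nat) \<Rightarrow> ('f, 'r) fm set \<Rightarrow> 'r \<Rightarrow> bool" where
  "lt_linear _ arF arR T lt \<longleftrightarrow> arR lt = 2 \<and>
     (\<forall>M :: ('a, 'f, 'r) struc. is_model arF arR T M \<longrightarrow>
        (\<forall>x\<in>carr M. \<not> lessM M lt x x) \<and>
        (\<forall>x\<in>carr M. \<forall>y\<in>carr M. \<forall>z\<in>carr M. lessM M lt x y \<and> lessM M lt y z \<longrightarrow> lessM M lt x z) \<and>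
        (\<forall>x\<in>carr M. \<forall>y\<in>carr M. lessM M lt x y \<or> x = y \<or> lessM M lt y x))"

definition skolem_functions :: "'a itself \<Rightarrow> ('f \<Rightarrow> nat) \<Rightarrow> ('r \<Rightarrow> nat) \<Rightarrow> ('f, 'r) fm set \<Rightarrow> bool" where
  "skolem_functions _ arF arR T \<longleftrightarrow>
     (\<forall>\<theta> y xs. wf_fm arF arR \<theta> \<and> y \<notin> set xs \<and> fv \<theta> \<subseteq> insert y (set xs) \<longrightarrow>
        (\<exists>\<tau>. wf_trm arF \<tau> \<and> vars_trm \<tau> \<subseteq> set xs \<and>
           (\<forall>M :: ('a, 'f, 'r) struc. is_model arF arR T M \<longrightarrow>
              (\<forall>e. asg_in M e \<longrightarrow>
                 (\<exists>c\<in>carr M. sat M (e(y := c)) \<theta>) \<longrightarrow> sat M (e(y := eval M e \<tau>)) \<theta>))))"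

fun unbounded :: "('a, 'f, 'r, 'z) struc_scheme \<Rightarrow> 'r \<Rightarrow> nat \<Rightarrow> ('a list \<Rightarrow> bool) \<Rightarrow> bool" where
  "unbounded M lt 0 P = P []"
| "unbounded M lt (Suc n) P =
     (\<forall>\<alpha>\<in>carr M. \<exists>x\<in>carr M. lessM M lt \<alpha> x \<and> unbounded M lt n (\<lambda>xs. P (x # xs)))"

definition below :: "('a, 'f, 'r, 'z) struc_scheme \<Rightarrow> 'r \<Rightarrow> 'a list \<Rightarrow> 'a \<Rightarrow> bool" where
  "below M lt cs a \<longleftrightarrow> (\<forall>c\<in>set cs. lessM M lt c a)"

definition regularity_scheme :: "'a itself \<Rightarrow> ('f \<Rightarrow> nat) \<Rightarrow> ('r \<Rightarrow> nat) \<Rightarrow> ('f, 'r) fm set \<Rightarrow> 'r \<Rightarrow> bool" where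
  "regularity_scheme _ arF arR T lt \<longleftrightarrow>
     (\<forall>\<phi> xs ys ts. wf_fm arF arR \<phi> \<and> distinct (xs @ ys @ ts) \<and> fv \<phi> \<subseteq> set (xs @ ys @ ts) \<longrightarrow>
       (\<forall>M :: ('a, 'f, 'r) struc. is_model arF arR T M \<longrightarrow>
         (\<forall>y0\<in>carr M. \<forall>bs. length bs = length ts \<and> set bs \<subseteq> carr M \<longrightarrow>
            unbounded M lt (length xs) (\<lambda>as. \<exists>cs. length cs = length ys \<and> set cs \<subseteq> carr M \<and>
                 below M lt cs y0 \<and> holds M \<phi> (xs @ ys @ ts) (as @ cs @ bs)) \<longrightarrow>
            (\<exists>cs. length cs = length ys \<and> set cs \<subseteq> carr M \<and> below M lt cs y0 \<and>
                 unbounded M lt (length xs) (\<lambda>as. holds M \<phi> (xs @ ys @ ts) (as @ cs @ bs))))))"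

text \<open>B_tau(xs; a) evaluated at the tuple xv (n = length xv), for a term tau(us, ss)
  with k = length us: for all 0 <= i_0 < ... < i_k < n (0-based indices),
  (forall ss < a) tau(xv_{i_0},...,xv_{i_{k-1}}, ss) < xv_{i_k}.\<close>
definition B_tau :: "('a, 'f, 'r, 'z) struc_scheme \<Rightarrow> 'r \<Rightarrow> 'f trm \<Rightarrow> nat list \<Rightarrow> nat list
    \<Rightarrow> 'a \<Rightarrow> 'a list \<Rightarrow> bool" where
  "B_tau M lt \<tau> us ss a xv \<longleftrightarrow>
     (\<forall>idx. strict_mono_on {..length us} idx \<and> idx (length us) < length xv \<longrightarrow>
        (\<forall>sv. length sv = length ss \<and> set sv \<subseteq> carr M \<and> below M lt sv a \<longrightarrow>
           lessM M lt (evalv M \<tau> (us @ ss) (map (\<lambda>j. xv ! idx j) [0..<length us] @ sv))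
                      (xv ! idx (length us))))"

end

theory Submission
  imports Defs
begin

text \<open>Suppose phi \<and> B_tau were bounded. The negation of B_tau is a finite disjunction of
  failures of A_tau, and unboundedness distributes over finite disjunctions because the final
  segments of a linear order are directed; so phi \<and> \<not> A_tau(x_q, x_p; a) is unbounded for one
  choice of indices q < p. Each failure is witnessed by parameters s < a, and the regularity
  scheme fixes them once and for all as some c < a. But then x_p never exceeds tau(x_q, c), a
  value determined by the coordinates before x_p, which is incompatible with unboundedness in
  x_p.\<close>

fun rename_trm :: "(nat \<Rightarrow> nat) \<Rightarrow> 'f trm \<Rightarrow> 'f trm" where
  "rename_trm \<rho> (Var v) = Var (\<rho> v)"
| "rename_trm \<rho> (Fn f ts) = Fn f (map (rename_trm \<rho>) ts)"

lemma eval_rename_trm: "eval M e (rename_trm \<rho> t) = eval M (\<lambda>v. e (\<rho> v)) t"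
  by (induction t) (simp_all cong: map_cong)

lemma vars_rename_trm: "vars_trm (rename_trm \<rho> t) = \<rho> ` vars_trm t"
  by (induction t) auto

lemma wf_rename_trm: "wf_trm arF (rename_trm \<rho> t) = wf_trm arF t"
  by (induction t) auto

lemma eval_cong: "\<forall>v\<in>vars_trm t. e v = e' v \<Longrightarrow> eval M e t = eval M e' t"
  by (induction t) (simp_all cong: map_cong)

lemma sat_cong: "\<forall>v\<in>fv p. e v = e' v \<Longrightarrow> sat M e p = sat M e' p"
proof (induction p arbitrary: e e')
  case (Eq s t)
  then show ?case using eval_cong[of s e e' M] eval_cong[of t e e' M] by simp
next
  case (Rel r ts)
  then have "eval M e t = eval M e' t" if "t \<in> set ts" for t
    using that by (intro eval_cong) auto
  then show ?case by (simp cong: map_cong)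
next
  case (Imp p q)
  then show ?case by (metis Un_iff fv.simps(4) sat.simps(4))
next
  case (All n p)
  then have "sat M (e(n := x)) p = sat M (e'(n := x)) p" for x
    by (intro All.IH) auto
  then show ?case by simp
qed simp

lemma eval_in_carr:
  "is_struc arF M \<Longrightarrow> wf_trm arF t \<Longrightarrow> (\<And>v. e v \<in> carr M) \<Longrightarrow> eval M e t \<in> carr M"
proof (induction t)
  case (Fn f ts)
  then have "set (map (eval M e) ts) \<subseteq> carr M" by auto
  with Fn.prems show ?case by (simp add: is_struc_def)
qed simp

lemma asg_in_carr: "carr M \<noteq> {} \<Longrightarrow> set cs \<subseteq> carr M \<Longrightarrow> asg M vs cs v \<in> carr M"
  by (auto simp: asg_def some_in_eq dest!: map_of_SomeD set_zip_rightD split: option.split)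

lemma asg_map:
  assumes "distinct vs" "v \<in> set vs"
  shows "asg M vs (map e vs) v = e v"
proof -
  obtain i where "i < length vs" "v = vs ! i"
    using assms(2) by (metis in_set_conv_nth)
  then show ?thesis
    using assms(1) by (simp add: asg_def map_of_zip_nth)
qed

lemma map_asg: "distinct vs \<Longrightarrow> length vs = length cs \<Longrightarrow> map (asg M vs cs) vs = cs"
  by (intro nth_equalityI) (auto simp: asg_def map_of_zip_nth)

lemma eval_eq_evalv:
  "distinct vs \<Longrightarrow> vars_trm t \<subseteq> set vs \<Longrightarrow> map e vs = cs \<Longrightarrow> eval M e t = evalv M t vs cs"
  unfolding evalv_def by (rule eval_cong) (auto simp: asg_map)

lemma sat_eq_holds:
  "distinct vs \<Longrightarrow> fv p \<subseteq> set vs \<Longrightarrow> map e vs = cs \<Longrightarrow> sat M e p = holds M p vs cs"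
  unfolding holds_def by (rule sat_cong) (auto simp: asg_map)

lemma map_renaming_of_zip:
  assumes "distinct vs" "length vs = length ws"
  shows "map (\<lambda>v. case map_of (zip vs ws) v of Some w \<Rightarrow> w | None \<Rightarrow> v) vs = ws"
  using assms by (intro nth_equalityI) (auto simp: map_of_zip_nth)

lemma fresh_vars:
  fixes V :: "nat set"
  assumes "finite V"
  obtains ys where "length ys = m" "distinct ys" "set ys \<inter> V = {}"
proof -
  obtain N where N: "\<forall>v\<in>V. v < N" using assms finite_nat_set_iff_bounded by blast
  show thesis
  proof (rule that)
    show "set [N..<N + m] \<inter> V = {}" using N by fastforce
  qed simp_all
qed

lemma unbounded_mono:
  "unbounded M lt n P \<Longrightarrow> (\<And>as. length as = n \<Longrightarrow> set as \<subseteq> carr M \<Longrightarrow> P as \<Longrightarrow> Q as)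
    \<Longrightarrow> unbounded M lt n Q"
proof (induction n arbitrary: P Q)
  case (Suc n)
  show ?case unfolding unbounded.simps
  proof
    fix \<alpha> assume "\<alpha> \<in> carr M"
    with Suc.prems(1) obtain x where x: "x \<in> carr M" "lessM M lt \<alpha> x"
      and rest: "unbounded M lt n (\<lambda>xs. P (x # xs))" by auto
    from rest have "unbounded M lt n (\<lambda>xs. Q (x # xs))"
      by (rule Suc.IH) (use Suc.prems(2) x(1) in auto)
    with x show "\<exists>x\<in>carr M. lessM M lt \<alpha> x \<and> unbounded M lt n (\<lambda>xs. Q (x # xs))" by auto
  qed
qed simp

lemma unbounded_witness:
  assumes "carr M \<noteq> {}" "unbounded M lt n P"
  obtains as where "length as = n" "set as \<subseteq> carr M" "P as"
  using assms(2)
proof (induction n arbitrary: P thesis)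
  case (Suc n)
  obtain d where "d \<in> carr M" using assms(1) by auto
  with Suc.prems(2) obtain x where "x \<in> carr M" "unbounded M lt n (\<lambda>xs. P (x # xs))" by auto
  then show ?case using Suc.IH[of "\<lambda>xs. P (x # xs)"] Suc.prems(1)[of "x # _"] by auto
qed simp

text \<open>Any two final segments of \<open><\<close> contain a common one; this is all of linearity that
  \<open>unbounded_disj\<close> uses.\<close>
definition tails_directed :: "('a, 'f, 'r, 'z) struc_scheme \<Rightarrow> 'r \<Rightarrow> bool" where
  "tails_directed M lt \<longleftrightarrow> (\<forall>a\<in>carr M. \<forall>b\<in>carr M. \<exists>c\<in>carr M. \<forall>x\<in>carr M.
     lessM M lt c x \<longrightarrow> lessM M lt a x \<and> lessM M lt b x)"

lemma tails_directed_if_lt_linear: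
  fixes M :: "('a, 'f, 'r) struc"
  assumes "lt_linear TYPE('a) arF arR T lt" "is_model arF arR T M"
  shows "tails_directed M lt"
  unfolding tails_directed_def
proof (intro ballI)
  fix a b assume ab: "a \<in> carr M" "b \<in> carr M"
  have trans: "\<forall>x\<in>carr M. \<forall>y\<in>carr M. \<forall>z\<in>carr M. lessM M lt x y \<and> lessM M lt y z \<longrightarrow> lessM M lt x z"
    and total: "\<forall>x\<in>carr M. \<forall>y\<in>carr M. lessM M lt x y \<or> x = y \<or> lessM M lt y x"
    using assms unfolding lt_linear_def by blast+
  show "\<exists>c\<in>carr M. \<forall>x\<in>carr M. lessM M lt c x \<longrightarrow> lessM M lt a x \<and> lessM M lt b x"
  proof (cases "lessM M lt a b")
    case True
    then show ?thesis using ab trans by blast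
  next
    case False
    then have "a = b \<or> lessM M lt b a" using ab total by blast
    then show ?thesis using ab trans by blast
  qed
qed

lemma unbounded_disj:
  assumes "tails_directed M lt"
  shows "unbounded M lt n (\<lambda>as. P as \<or> Q as) \<Longrightarrow> unbounded M lt n P \<or> unbounded M lt n Q"
proof (induction n arbitrary: P Q)
  case (Suc n)
  show ?case
  proof (rule ccontr)
    assume "\<not> ?case"
    then obtain a b where ab: "a \<in> carr M" "b \<in> carr M"
      and a: "\<forall>x\<in>carr M. lessM M lt a x \<longrightarrow> \<not> unbounded M lt n (\<lambda>xs. P (x # xs))"
      and b: "\<forall>x\<in>carr M. lessM M lt b x \<longrightarrow> \<not> unbounded M lt n (\<lambda>xs. Q (x # xs))"
      by auto
    from assms ab obtain c where "c \<in> carr M"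
      and c: "\<forall>x\<in>carr M. lessM M lt c x \<longrightarrow> lessM M lt a x \<and> lessM M lt b x"
      unfolding tails_directed_def by blast
    with Suc.prems obtain x where x: "x \<in> carr M" "lessM M lt c x"
      and rest: "unbounded M lt n (\<lambda>xs. P (x # xs) \<or> Q (x # xs))" by auto
    from x c have "lessM M lt a x" "lessM M lt b x" by auto
    with Suc.IH[OF rest] a b x(1) show False by blast
  qed
qed simp

lemma unbounded_Bex_finite:
  assumes "tails_directed M lt" "carr M \<noteq> {}"
  shows "finite I \<Longrightarrow> unbounded M lt n (\<lambda>as. \<exists>i\<in>I. P i as) \<Longrightarrow> \<exists>i\<in>I. unbounded M lt n (P i)"
proof (induction I rule: finite_induct)
  case empty
  then show ?case using unbounded_witness[OF assms(2)] by fastforce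
next
  case (insert j I)
  then have "unbounded M lt n (\<lambda>as. P j as \<or> (\<exists>i\<in>I. P i as))"
    by (auto elim: unbounded_mono)
  then have "unbounded M lt n (P j) \<or> unbounded M lt n (\<lambda>as. \<exists>i\<in>I. P i as)"
    by (rule unbounded_disj[OF assms(1)])
  then show ?case using insert.IH by blast
qed

lemma unbounded_exceeds_prefix_function:
  assumes "carr M \<noteq> {}"
  shows "unbounded M lt n P \<Longrightarrow> j < n \<Longrightarrow> (\<And>l. length l = j \<Longrightarrow> set l \<subseteq> carr M \<Longrightarrow> g l \<in> carr M)
    \<Longrightarrow> \<exists>as. length as = n \<and> set as \<subseteq> carr M \<and> P as \<and> lessM M lt (g (take j as)) (as ! j)"
proof (induction j arbitrary: n P g)
  case 0
  then obtain m where n: "n = Suc m" by (cases n) auto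
  have "g [] \<in> carr M" using 0 by simp
  with "0.prems"(1) n obtain x where x: "x \<in> carr M" "lessM M lt (g []) x"
    and "unbounded M lt m (\<lambda>xs. P (x # xs))" by auto
  then obtain xs where "length xs = m" "set xs \<subseteq> carr M" "P (x # xs)"
    using unbounded_witness[OF assms] by metis
  with x n show ?case by (intro exI[of _ "x # xs"]) auto
next
  case (Suc j)
  then obtain m where n: "n = Suc m" by (cases n) auto
  obtain d where "d \<in> carr M" using assms by auto
  with Suc.prems(1) n obtain x where x: "x \<in> carr M" "unbounded M lt m (\<lambda>xs. P (x # xs))" by auto
  have "\<exists>as. length as = m \<and> set as \<subseteq> carr M \<and> P (x # as) \<and> lessM M lt (g (x # take j as)) (as ! j)"
    using Suc.prems(2,3) x n by (intro Suc.IH[OF x(2)]) auto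
  then obtain as where "length as = m" "set as \<subseteq> carr M" "P (x # as)"
    "lessM M lt (g (x # take j as)) (as ! j)" by blast
  with x n show ?case by (intro exI[of _ "x # as"]) auto
qed

text \<open>\<open>A_tau M lt \<tau> us ss a xv q p\<close> is the paper's A_tau(x_i1, ..., x_ik, x_i(k+1); a) at the
  tuple \<open>xv\<close>, with 0-based indices \<open>q = [i1, ..., ik]\<close> and \<open>p = i(k+1)\<close>.\<close>
definition A_tau :: "('a, 'f, 'r, 'z) struc_scheme \<Rightarrow> 'r \<Rightarrow> 'f trm \<Rightarrow> nat list \<Rightarrow> nat list
    \<Rightarrow> 'a \<Rightarrow> 'a list \<Rightarrow> nat list \<Rightarrow> nat \<Rightarrow> bool" where
  "A_tau M lt \<tau> us ss a xv q p \<longleftrightarrow>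
     (\<forall>sv. length sv = length ss \<and> set sv \<subseteq> carr M \<and> below M lt sv a \<longrightarrow>
        lessM M lt (evalv M \<tau> (us @ ss) (map (nth xv) q @ sv)) (xv ! p))"

lemma not_B_tau_E:
  assumes "\<not> B_tau M lt \<tau> us ss a xv"
  obtains q p where "length q = length us" "set q \<subseteq> {..<p}" "p < length xv"
    "\<not> A_tau M lt \<tau> us ss a xv q p"
proof -
  from assms obtain idx sv where idx: "strict_mono_on {..length us} idx" "idx (length us) < length xv"
    and sv: "length sv = length ss" "set sv \<subseteq> carr M" "below M lt sv a"
    and less: "\<not> lessM M lt (evalv M \<tau> (us @ ss) (map (\<lambda>j. xv ! idx j) [0..<length us] @ sv))
      (xv ! idx (length us))"
    unfolding B_tau_def by blast
  define q where "q = map idx [0..<length us]"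
  show thesis
  proof (rule that)
    show "length q = length us" by (simp add: q_def)
    show "set q \<subseteq> {..<idx (length us)}"
      using idx(1) by (auto simp: q_def intro: strict_mono_onD)
    show "\<not> A_tau M lt \<tau> us ss a xv q (idx (length us))"
      using sv less by (auto simp: A_tau_def q_def comp_def)
  qed (fact idx(2))
qed

lemma finite_A_tau_indices: "finite {(q, p). length q = k \<and> set q \<subseteq> {..<p} \<and> p < (n::nat)}"
proof (rule finite_subset)
  show "{(q, p). length q = k \<and> set q \<subseteq> {..<p} \<and> p < n} \<subseteq> {q. set q \<subseteq> {..<n} \<and> length q = k} \<times> {..<n}"
    by auto
  show "finite ({q. set q \<subseteq> {..<n} \<and> length q = k} \<times> {..<n})"
    by (intro finite_cartesian_product finite_lists_length_eq) simp_all
qed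

lemma A_tau_failure_definable:
  fixes \<phi> :: "('f, 'r) fm" and \<tau> :: "'f trm"
  assumes wf_\<phi>: "wf_fm arF arR \<phi>" and fv_\<phi>: "fv \<phi> \<subseteq> set (xs @ ts)" and "distinct (xs @ ts)"
    and wf_\<tau>: "wf_trm arF \<tau>" and vars_\<tau>: "vars_trm \<tau> \<subseteq> set (us @ ss)" and "distinct (us @ ss)"
    and "length q = length us" and q: "set q \<subseteq> {..<length xs}" and p: "p < length xs"
    and "arR lt = 2"
  obtains ys \<psi> where "length ys = length ss" "distinct (xs @ ys @ ts)"
    "wf_fm arF arR \<psi>" "fv \<psi> \<subseteq> set (xs @ ys @ ts)"
    "\<And>(M :: ('a, 'f, 'r) struc) as cs bs.
      length as = length xs \<Longrightarrow> length cs = length ss \<Longrightarrow> length bs = length ts \<Longrightarrow>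
      holds M \<psi> (xs @ ys @ ts) (as @ cs @ bs) \<longleftrightarrow>
      holds M \<phi> (xs @ ts) (as @ bs) \<and> \<not> lessM M lt (evalv M \<tau> (us @ ss) (map (nth as) q @ cs)) (as ! p)"
proof -
  obtain ys where ys: "length ys = length ss" "distinct ys" "set ys \<inter> set (xs @ ts) = {}"
    using fresh_vars[of "set (xs @ ts)"] by blast
  define ws where "ws = map (nth xs) q @ ys"
  define \<rho> where "\<rho> = (\<lambda>v. case map_of (zip (us @ ss) ws) v of Some w \<Rightarrow> w | None \<Rightarrow> v)"
  define \<tau>' where "\<tau>' = rename_trm \<rho> \<tau>"
  \<comment> \<open>phi \<and> \<not> tau(x_q, y) < x_p, the fresh variables y standing for the parameters s\<close>
  define \<psi> where "\<psi> = Neg (Imp \<phi> (Rel lt [\<tau>', Var (xs ! p)]))"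
  have "length (us @ ss) = length ws"
    using \<open>length q = length us\<close> ys(1) by (simp add: ws_def)
  then have \<rho>_ws: "map \<rho> (us @ ss) = ws"
    unfolding \<rho>_def by (rule map_renaming_of_zip[OF \<open>distinct (us @ ss)\<close>])
  have "vars_trm \<tau>' \<subseteq> set ws"
    unfolding \<tau>'_def vars_rename_trm using vars_\<tau> \<rho>_ws by (metis image_mono set_map)
  also have "set ws \<subseteq> set xs \<union> set ys"
    using q by (auto simp: ws_def)
  finally have vars_\<tau>': "vars_trm \<tau>' \<subseteq> set xs \<union> set ys" .
  have distinct_xyt: "distinct (xs @ ys @ ts)"
    using ys(2,3) \<open>distinct (xs @ ts)\<close> by auto
  show thesis
  proof (rule that)
    show "length ys = length ss" by (fact ys(1))
    show "distinct (xs @ ys @ ts)" by (fact distinct_xyt)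
    show "wf_fm arF arR \<psi>"
      using wf_\<phi> wf_\<tau> \<open>arR lt = 2\<close> by (simp add: \<psi>_def \<tau>'_def Neg_def wf_rename_trm)
    show "fv \<psi> \<subseteq> set (xs @ ys @ ts)"
      using fv_\<phi> vars_\<tau>' p by (auto simp: \<psi>_def Neg_def)
  next
    fix M :: "('a, 'f, 'r) struc" and as cs bs :: "'a list"
    assume lengths: "length as = length xs" "length cs = length ss" "length bs = length ts"
    define e where "e = asg M (xs @ ys @ ts) (as @ cs @ bs)"
    have "map e (xs @ ys @ ts) = as @ cs @ bs"
      unfolding e_def using distinct_xyt lengths ys(1) by (intro map_asg) simp_all
    then have e_xs: "map e xs = as" and e_ys: "map e ys = cs" and e_ts: "map e ts = bs"
      using lengths ys(1) by (simp_all add: append_eq_append_conv)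
    have "sat M e \<phi> = holds M \<phi> (xs @ ts) (as @ bs)"
      using \<open>distinct (xs @ ts)\<close> fv_\<phi> e_xs e_ts by (intro sat_eq_holds) simp_all
    moreover have "map e ws = map (nth as) q @ cs"
      using e_xs e_ys q by (auto simp: ws_def)
    then have "eval M e \<tau>' = evalv M \<tau> (us @ ss) (map (nth as) q @ cs)"
      unfolding \<tau>'_def eval_rename_trm using \<open>distinct (us @ ss)\<close> vars_\<tau> \<rho>_ws
      by (intro eval_eq_evalv) (auto simp flip: map_map[of e \<rho>, unfolded comp_def])
    moreover have "e (xs ! p) = as ! p"
      using e_xs p by auto
    ultimately show "holds M \<psi> (xs @ ys @ ts) (as @ cs @ bs) \<longleftrightarrow>
      holds M \<phi> (xs @ ts) (as @ bs) \<and> \<not> lessM M lt (evalv M \<tau> (us @ ss) (map (nth as) q @ cs)) (as ! p)"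
      by (simp add: holds_def e_def[symmetric] \<psi>_def Neg_def lessM_def)
  qed
qed

lemma regularity_schemeD:
  fixes M :: "('a, 'f, 'r) struc"
  assumes "regularity_scheme TYPE('a) arF arR T lt" "is_model arF arR T M"
    and "distinct (xs @ ys @ ts)" "wf_fm arF arR \<phi>" "fv \<phi> \<subseteq> set (xs @ ys @ ts)"
    and "y0 \<in> carr M" "length bs = length ts" "set bs \<subseteq> carr M"
    and "unbounded M lt (length xs) (\<lambda>as. \<exists>cs. length cs = length ys \<and> set cs \<subseteq> carr M \<and>
      below M lt cs y0 \<and> holds M \<phi> (xs @ ys @ ts) (as @ cs @ bs))"
  obtains cs where "length cs = length ys" "set cs \<subseteq> carr M" "below M lt cs y0"
    "unbounded M lt (length xs) (\<lambda>as. holds M \<phi> (xs @ ys @ ts) (as @ cs @ bs))"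
  using assms(1)[unfolded regularity_scheme_def, THEN spec[of _ \<phi>], THEN spec[of _ xs],
      THEN spec[of _ ys], THEN spec[of _ ts], THEN mp, THEN spec[of _ M], THEN mp,
      THEN bspec[of _ _ y0], THEN spec[of _ bs], THEN mp, THEN mp]
    assms(2-) by blast

lemma not_A_tau_bounded:
  fixes M :: "('a, 'f, 'r) struc"
  assumes regular: "regularity_scheme TYPE('a) arF arR T lt" and model: "is_model arF arR T M"
    and "arR lt = 2"
    and "wf_fm arF arR \<phi>" "fv \<phi> \<subseteq> set (xs @ ts)" "distinct (xs @ ts)"
    and "length bs = length ts" "set bs \<subseteq> carr M"
    and wf_\<tau>: "wf_trm arF \<tau>" and "vars_trm \<tau> \<subseteq> set (us @ ss)" "distinct (us @ ss)"
    and "length q = length us" and q: "set q \<subseteq> {..<p}" and p: "p < length xs" and "a \<in> carr M"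
  shows "\<not> unbounded M lt (length xs)
    (\<lambda>as. holds M \<phi> (xs @ ts) (as @ bs) \<and> \<not> A_tau M lt \<tau> us ss a as q p)"
proof
  assume unb: "unbounded M lt (length xs)
    (\<lambda>as. holds M \<phi> (xs @ ts) (as @ bs) \<and> \<not> A_tau M lt \<tau> us ss a as q p)"
  have struc: "is_struc arF M" and ne: "carr M \<noteq> {}"
    using model by (auto simp: is_model_def is_struc_def)
  have "set q \<subseteq> {..<length xs}" using q p by auto
  then obtain ys \<psi> where ys: "length ys = length ss" and prems: "distinct (xs @ ys @ ts)"
      "wf_fm arF arR \<psi>" "fv \<psi> \<subseteq> set (xs @ ys @ ts)"
    and \<psi>: "\<And>as cs. length as = length xs \<Longrightarrow> length cs = length ss \<Longrightarrow>
      holds M \<psi> (xs @ ys @ ts) (as @ cs @ bs) \<longleftrightarrow>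
      holds M \<phi> (xs @ ts) (as @ bs) \<and> \<not> lessM M lt (evalv M \<tau> (us @ ss) (map (nth as) q @ cs)) (as ! p)"
  proof (rule A_tau_failure_definable[OF assms(4-6) wf_\<tau> assms(10-12) _ p \<open>arR lt = 2\<close>])
    fix ys \<psi>
    assume "length ys = length ss" "distinct (xs @ ys @ ts)" "wf_fm arF arR \<psi>" "fv \<psi> \<subseteq> set (xs @ ys @ ts)"
      and "\<And>(N :: ('a, 'f, 'r) struc) as cs bs'. length as = length xs \<Longrightarrow>
        length cs = length ss \<Longrightarrow> length bs' = length ts \<Longrightarrow>
        holds N \<psi> (xs @ ys @ ts) (as @ cs @ bs') \<longleftrightarrow>
        holds N \<phi> (xs @ ts) (as @ bs') \<and> \<not> lessM N lt (evalv N \<tau> (us @ ss) (map (nth as) q @ cs)) (as ! p)"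
    with \<open>length bs = length ts\<close> show thesis by (intro that) blast+
  qed
  have "unbounded M lt (length xs) (\<lambda>as. \<exists>cs. length cs = length ys \<and> set cs \<subseteq> carr M \<and>
    below M lt cs a \<and> holds M \<psi> (xs @ ys @ ts) (as @ cs @ bs))"
    using unb by (rule unbounded_mono) (auto simp: A_tau_def \<psi> ys)
  then obtain cs where cs: "length cs = length ys" "set cs \<subseteq> carr M" "below M lt cs a"
    and unb_cs: "unbounded M lt (length xs) (\<lambda>as. holds M \<psi> (xs @ ys @ ts) (as @ cs @ bs))"
    by (rule regularity_schemeD[OF regular model prems \<open>a \<in> carr M\<close> assms(7,8)])
  define g where "g pre = evalv M \<tau> (us @ ss) (map (nth pre) q @ cs)" for pre
  have "g pre \<in> carr M" if "length pre = p" "set pre \<subseteq> carr M" for pre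
  proof -
    have "pre ! i \<in> carr M" if "i \<in> set q" for i
    proof -
      have "i < length pre" using q that \<open>length pre = p\<close> by auto
      then show ?thesis using \<open>set pre \<subseteq> carr M\<close> by (meson nth_mem subsetD)
    qed
    then have "set (map (nth pre) q @ cs) \<subseteq> carr M"
      using cs(2) by auto
    then show ?thesis
      unfolding g_def evalv_def by (intro eval_in_carr[OF struc wf_\<tau>] asg_in_carr[OF ne])
  qed
  then obtain as where as: "length as = length xs" "holds M \<psi> (xs @ ys @ ts) (as @ cs @ bs)"
    and "lessM M lt (g (take p as)) (as ! p)"
    using unbounded_exceeds_prefix_function[OF ne unb_cs p] by blast
  moreover have "map (nth (take p as)) q = map (nth as) q"
    using q by (auto intro: map_cong)
  then have "g (take p as) = evalv M \<tau> (us @ ss) (map (nth as) q @ cs)"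
    unfolding g_def by (rule arg_cong)
  ultimately show False using \<psi> cs(1) ys by simp
qed

theorem lemma2p4:
  fixes arF :: "'f::countable \<Rightarrow> nat" and arR :: "'r::countable \<Rightarrow> nat"
    and lt :: 'r and T :: "('f, 'r) fm set"
    and M :: "('a, 'f, 'r) struc"
    and \<phi> :: "('f, 'r) fm" and xs ts :: "nat list" and bs :: "'a list"
    and \<tau> :: "'f trm" and us ss :: "nat list" and a :: 'a
  assumes "complete_theory TYPE('a) arF arR T"
    and "skolem_functions TYPE('a) arF arR T"
    and "lt_linear TYPE('a) arF arR T lt"
    and "regularity_scheme TYPE('a) arF arR T lt"
    and "is_model arF arR T M"
    and "wf_fm arF arR \<phi>" and "distinct (xs @ ts)" and "fv \<phi> \<subseteq> set (xs @ ts)"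
    and "length bs = length ts" and "set bs \<subseteq> carr M"
    and "unbounded M lt (length xs) (\<lambda>as. holds M \<phi> (xs @ ts) (as @ bs))"
    and "wf_trm arF \<tau>" and "distinct (us @ ss)" and "vars_trm \<tau> \<subseteq> set (us @ ss)"
    and "length us < length xs"
    and "a \<in> carr M"
  shows "unbounded M lt (length xs)
           (\<lambda>as. holds M \<phi> (xs @ ts) (as @ bs) \<and> B_tau M lt \<tau> us ss a as)"
proof -
  have "arR lt = 2" using assms(3) by (simp add: lt_linear_def)
  have directed: "tails_directed M lt" by (rule tails_directed_if_lt_linear[OF assms(3,5)])
  have ne: "carr M \<noteq> {}" using assms(5) by (simp add: is_model_def is_struc_def)
  define Idx where "Idx = {(q, p). length q = length us \<and> set q \<subseteq> {..<p} \<and> p < length xs}"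
  let ?\<Phi> = "\<lambda>as. holds M \<phi> (xs @ ts) (as @ bs)"
  let ?A = "\<lambda>i as. ?\<Phi> as \<and> \<not> A_tau M lt \<tau> us ss a as (fst i) (snd i)"
  have split: "(?\<Phi> as \<and> B_tau M lt \<tau> us ss a as) \<or> (\<exists>i\<in>Idx. ?A i as)"
    if "length as = length xs" "?\<Phi> as" for as
  proof (cases "B_tau M lt \<tau> us ss a as")
    case False
    then obtain q p where "length q = length us" "set q \<subseteq> {..<p}" "p < length as"
      "\<not> A_tau M lt \<tau> us ss a as q p" by (rule not_B_tau_E)
    with that show ?thesis by (auto simp: Idx_def intro!: bexI[of _ "(q, p)"])
  qed (use that in simp)
  have "unbounded M lt (length xs)
      (\<lambda>as. (?\<Phi> as \<and> B_tau M lt \<tau> us ss a as) \<or> (\<exists>i\<in>Idx. ?A i as))"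
    by (rule unbounded_mono[OF assms(11) split])
  then have "unbounded M lt (length xs) (\<lambda>as. ?\<Phi> as \<and> B_tau M lt \<tau> us ss a as)
      \<or> unbounded M lt (length xs) (\<lambda>as. \<exists>i\<in>Idx. ?A i as)"
    by (rule unbounded_disj[OF directed])
  moreover have "\<not> unbounded M lt (length xs) (\<lambda>as. \<exists>i\<in>Idx. ?A i as)"
  proof
    assume "unbounded M lt (length xs) (\<lambda>as. \<exists>i\<in>Idx. ?A i as)"
    moreover have "finite Idx"
      unfolding Idx_def by (rule finite_A_tau_indices)
    ultimately obtain i where "i \<in> Idx" and unb: "unbounded M lt (length xs) (?A i)"
      using unbounded_Bex_finite[OF directed ne, of Idx "length xs" ?A] by blast
    then obtain q p where i: "i = (q, p)" and "length q = length us" "set q \<subseteq> {..<p}" "p < length xs"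
      unfolding Idx_def by blast
    from not_A_tau_bounded[OF assms(4,5) \<open>arR lt = 2\<close> assms(6,8,7,9,10,12,14,13) this(2-4) assms(16)]
    show False using unb unfolding i by simp
  qed
  ultimately show ?thesis by blast
qed

end
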